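(* Let $F\in\mathbb{C}(X_1,\dots,X_n)$ be a rational function admitting a power series expansion at the origin $\sum_{k_1,\dots,k_n}a_{k_1,\dots,k_n}X_1^{k_1}\cdots X_n^{k_n}$ with non-negative coefficients $a_{k_1,\dots,k_n}\geq 0$. If $\sum_{k_1,\dots,k_n}a_{k_1,\dots,k_n}<\infty$, then there exists $\varepsilon>0$ such that this power series converges on the polydisk $\{(w_1,\dots,w_n)\in\mathbb{C}^n:\ |w_i|\leq 1+\varepsilon\text{ for all }1\leq i\leq n\}$. *)

theory Defs
  imports "HOL-Analysis.Analysis"
begin

definition multi_indices :: "nat \<Rightarrow> (nat \<Rightarrow> nat) set" where
  "multi_indices n = {k. \<forall>i\<ge>n. k i = 0}"

text \<open>The monomial w_0^(k 0) * ... * w_(n-1)^(k (n-1)); points of C^n are w :: nat \<Rightarrow> complex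
  (only coordinates i < n matter).\<close>
definition monom_val :: "nat \<Rightarrow> (nat \<Rightarrow> nat) \<Rightarrow> (nat \<Rightarrow> complex) \<Rightarrow> complex" where
  "monom_val n k w = (\<Prod>i<n. w i ^ k i)"

definition is_mpoly_fun :: "nat \<Rightarrow> ((nat \<Rightarrow> complex) \<Rightarrow> complex) \<Rightarrow> bool" where
  "is_mpoly_fun n f \<longleftrightarrow> (\<exists>A c. finite A \<and> A \<subseteq> multi_indices n \<and>
      f = (\<lambda>w. \<Sum>k\<in>A. c k * monom_val n k w))"

end

theory Submission
  imports Defs "HOL-Complex_Analysis.Complex_Analysis" "HOL-Computational_Algebra.Polynomial_Factorial"
    "HOL-Computational_Algebra.Field_as_Ring"
begin

(* Group the coefficients by total degree: the sums b_m of the a_k with |k| = m are the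
   coefficients of the diagonal series g(t) = F(t, ..., t), and since a_k \<ge> 0, summability of
   a_k rho^|k| follows from that of b_m rho^m and gives convergence on the polydisc of
   radius rho.  The diagonal g is again rational: restricting P and Q to a line t + s v with
   Q v \<noteq> 0 and comparing the lowest order terms in s yields g q0 = p0 near 0 for polynomials
   p0, q0 in one variable (Q may vanish on the whole diagonal, hence the detour through lines).
   As the b_m are summable, g is bounded on the closed unit disc, so the reduced fraction p0/q0
   has no pole there and the radius of convergence of g exceeds 1. *)

lemma has_sum_infsum_fibres:
  fixes f :: "'a \<Rightarrow> 'b::banach"
  assumes "(f has_sum s) A"
  shows "((\<lambda>y. \<Sum>\<^sub>\<infinity>x\<in>{x \<in> A. g x = y}. f x) has_sum s) UNIV"
proof (rule has_sum_SigmaD)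
  have "bij_betw snd (SIGMA y:UNIV. {x \<in> A. g x = y}) A"
    by (auto simp: bij_betw_def inj_on_def image_iff)
  with assms show "((\<lambda>p. f (snd p)) has_sum s) (SIGMA y:UNIV. {x \<in> A. g x = y})"
    by (simp add: has_sum_reindex_bij_betw)
  show "((\<lambda>x. f (snd (y, x))) has_sum (\<Sum>\<^sub>\<infinity>x\<in>{x \<in> A. g x = y}. f x))
      {x \<in> A. g x = y}" for y
    using summable_on_subset_banach[OF has_sum_imp_summable[OF assms]] by auto
qed

lemma summable_on_if_fibres_summable:
  fixes f :: "'a \<Rightarrow> real"
  assumes "\<And>x. x \<in> A \<Longrightarrow> f x \<ge> 0"
    and "\<And>y. f summable_on {x \<in> A. g x = y}"
    and "(\<lambda>y. \<Sum>\<^sub>\<infinity>x\<in>{x \<in> A. g x = y}. f x) summable_on UNIV"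
  shows "f summable_on A"
proof -
  have "A = (\<Union>y. {x \<in> A. g x = y})" by auto
  moreover have "f summable_on (\<Union>y. {x \<in> A. g x = y})"
    by (subst summable_on_Union_iff[where g = "\<lambda>y. \<Sum>\<^sub>\<infinity>x\<in>{x \<in> A. g x = y}. f x"])
       (use assms in \<open>auto simp: disjoint_family_on_def\<close>)
  ultimately show ?thesis by simp
qed

lemma tendsto_poly_div_power_at_0:
  fixes p :: "complex poly"
  assumes "\<forall>j<m. coeff p j = 0"
  shows "((\<lambda>s. poly p s / s ^ m) \<longlongrightarrow> coeff p m) (at 0)"
  using assms
proof (induction m arbitrary: p)
  case 0
  have "isCont (poly p) 0" by simp
  then show ?case by (simp add: isCont_def poly_0_coeff_0)
next
  case (Suc m)
  obtain p' where p: "p = pCons 0 p'"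
    using Suc.prems by (metis pCons_cases coeff_pCons_0 zero_less_Suc)
  have "((\<lambda>s. poly p' s / s ^ m) \<longlongrightarrow> coeff p' m) (at 0)"
    using Suc.prems by (intro Suc.IH) (auto simp: p)
  moreover have "\<forall>\<^sub>F s in at 0. poly p' s / s ^ m = poly p s / s ^ Suc m"
    by (auto simp: eventually_at_filter p)
  ultimately show ?case
    by (simp add: p) (rule Lim_transform_eventually)
qed

lemma coeff_eq_if_poly_div_power_tendsto:
  fixes p :: "complex poly"
  assumes "((\<lambda>s. poly p s / s ^ m) \<longlongrightarrow> L) (at 0)"
  shows "coeff p m = L"
  using assms
proof (induction m arbitrary: p)
  case 0
  then have "(poly p \<longlongrightarrow> L) (at 0)" by simp
  moreover have "(poly p \<longlongrightarrow> poly p 0) (at 0)" by (simp add: isCont_def[symmetric])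
  ultimately show ?case by (simp add: poly_0_coeff_0 tendsto_unique[OF trivial_limit_at])
next
  case (Suc m)
  obtain c p' where p: "p = pCons c p'" by (cases p)
  have "((\<lambda>s. poly p s / s ^ Suc m * s ^ Suc m) \<longlongrightarrow> L * 0 ^ Suc m) (at 0)"
    by (intro tendsto_intros Suc.prems)
  moreover have "\<forall>\<^sub>F s in at 0. poly p s / s ^ Suc m * s ^ Suc m = poly p s"
    by (auto simp: eventually_at_filter)
  ultimately have "(poly p \<longlongrightarrow> 0) (at 0)"
    by (simp add: Lim_transform_eventually[of _ _ _ "poly p"])
  moreover have "(poly p \<longlongrightarrow> poly p 0) (at 0)" by (simp add: isCont_def[symmetric])
  ultimately have "c = 0" by (simp add: p tendsto_unique[OF trivial_limit_at])
  then have "\<forall>\<^sub>F s in at 0. poly p s / s ^ Suc m = poly p' s / s ^ m"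
    by (auto simp: eventually_at_filter p)
  then have "((\<lambda>s. poly p' s / s ^ m) \<longlongrightarrow> L) (at 0)"
    by (rule Lim_transform_eventually[OF Suc.prems])
  then show ?case by (simp add: p Suc.IH)
qed

lemma coeff_eq_limit_times_coeff:
  fixes p q :: "complex poly"
  assumes "(h \<longlongrightarrow> L) (at 0)"
    and "\<forall>\<^sub>F s in at 0. h s * poly q s = poly p s"
    and "\<forall>j<m. coeff q j = 0"
  shows "coeff p m = L * coeff q m"
proof (rule coeff_eq_if_poly_div_power_tendsto)
  have "((\<lambda>s. h s * (poly q s / s ^ m)) \<longlongrightarrow> L * coeff q m) (at 0)"
    using assms(1,3) by (intro tendsto_mult tendsto_poly_div_power_at_0)
  moreover have "\<forall>\<^sub>F s in at 0. h s * (poly q s / s ^ m) = poly p s / s ^ m"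
    using assms(2) by eventually_elim simp
  ultimately show "((\<lambda>s. poly p s / s ^ m) \<longlongrightarrow> L * coeff q m) (at 0)"
    by (rule Lim_transform_eventually)
qed

lemma eventually_poly_nonzero:
  fixes p :: "complex poly"
  assumes "p \<noteq> 0"
  shows "\<forall>\<^sub>F z in at x. poly p z \<noteq> 0"
  using islimpt_finite[OF poly_roots_finite[OF assms], of x] by (simp add: islimpt_iff_eventually)

lemma poly_map_poly_eval_swap:
  fixes X :: "'a::comm_ring_1 poly poly"
  shows "poly (map_poly (\<lambda>c. poly c t) X) s = poly (poly X [:s:]) t"
  by (induct X) (simp_all add: map_poly_pCons)

lemma poly_nonzero_on_larger_ball:
  fixes q :: "complex poly"
  assumes "q \<noteq> 0" and nonzero: "\<forall>z\<in>cball x r. poly q z \<noteq> 0"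
  obtains R where "R > r" and "\<forall>z\<in>ball x R. poly q z \<noteq> 0"
proof
  define roots where "roots = {z. poly q z = 0}"
  have "finite roots" using poly_roots_finite[OF \<open>q \<noteq> 0\<close>] by (simp add: roots_def)
  define R where "R = Min (insert (r + 1) (dist x ` roots))"
  have "dist x z > r" if "z \<in> roots" for z
    using nonzero that by (force simp: roots_def)
  then show "R > r"
    unfolding R_def using \<open>finite roots\<close> by (subst Min_gr_iff) auto
  show "\<forall>z\<in>ball x R. poly q z \<noteq> 0"
  proof (intro ballI notI)
    fix z assume "z \<in> ball x R" "poly q z = 0"
    then have "R \<le> dist x z" "dist x z < R"
      unfolding R_def using \<open>finite roots\<close> by (auto intro!: Min_le simp: roots_def)
    then show False by simp
  qed
qed

lemma poly_nonzero_if_coprime_bounded: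
  fixes p q :: "complex poly"
  assumes "coprime p q" and "norm (poly p z) \<le> B * norm (poly q z)"
  shows "poly q z \<noteq> 0"
proof
  assume "poly q z = 0"
  with assms(2) have "poly p z = 0" by simp
  with \<open>poly q z = 0\<close> have "[:-z, 1:] dvd p" "[:-z, 1:] dvd q"
    by (simp_all add: poly_eq_0_iff_dvd)
  with \<open>coprime p q\<close> have "is_unit [:-z, 1:]" by (blast intro: coprime_common_divisor)
  then show False by (simp add: is_unit_iff_degree)
qed

lemma eventually_mult_poly_eq_coprime:
  fixes p q :: "complex poly"
  assumes "q \<noteq> 0" and "\<forall>\<^sub>F z in at x. f z * poly q z = poly p z"
  obtains p' q' where "coprime p' q'" "q' \<noteq> 0" "\<forall>\<^sub>F z in at x. f z * poly q' z = poly p' z"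
proof
  define d where "d = gcd p q"
  have "d \<noteq> 0" using \<open>q \<noteq> 0\<close> by (simp add: d_def)
  have p: "p = p div d * d" and q: "q = q div d * d" by (simp_all add: d_def)
  show "coprime (p div d) (q div d)"
    unfolding d_def using \<open>q \<noteq> 0\<close> by (intro div_gcd_coprime) auto
  show "q div d \<noteq> 0" using \<open>q \<noteq> 0\<close> q by auto
  from assms(2) eventually_poly_nonzero[OF \<open>d \<noteq> 0\<close>]
  show "\<forall>\<^sub>F z in at x. f z * poly (q div d) z = poly (p div d) z"
  proof eventually_elim
    case (elim z)
    have "(f z * poly (q div d) z) * poly d z = poly (p div d) z * poly d z"
      using elim(1) by (metis p q poly_mult mult.assoc)
    with elim(2) show ?case by simp
  qed
qed

lemma norm_eval_fps_le:
  fixes F :: "complex fps"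
  assumes summable: "summable (\<lambda>m. norm (fps_nth F m))" and "norm z \<le> 1"
  shows "norm (eval_fps F z) \<le> (\<Sum>m. norm (fps_nth F m))"
proof -
  have term_le: "norm (fps_nth F m * z ^ m) \<le> norm (fps_nth F m)" for m
    using \<open>norm z \<le> 1\<close> by (simp add: norm_mult norm_power mult_left_le power_le_one)
  have norm_summable: "summable (\<lambda>m. norm (fps_nth F m * z ^ m))"
    by (rule summable_comparison_test[OF _ summable]) (use term_le in auto)
  have "norm (eval_fps F z) \<le> (\<Sum>m. norm (fps_nth F m * z ^ m))"
    unfolding eval_fps_def by (rule summable_norm[OF norm_summable])
  also have "\<dots> \<le> (\<Sum>m. norm (fps_nth F m))"
    by (rule suminf_le[OF term_le norm_summable summable])
  finally show ?thesis .
qed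

lemma summable_if_fps_conv_radius_gt:
  fixes F :: "complex fps"
  assumes "0 \<le> r" and "ereal r < fps_conv_radius F"
  obtains \<rho> where "\<rho> > r" and "summable (\<lambda>m. norm (fps_nth F m) * \<rho> ^ m)"
proof -
  obtain \<rho> where "ereal r < ereal \<rho>" and "ereal \<rho> < fps_conv_radius F"
    using ereal_dense2[OF assms(2)] by blast
  then have "\<rho> > r" and "summable (\<lambda>m. norm (fps_nth F m * complex_of_real \<rho> ^ m))"
    using \<open>0 \<le> r\<close> by (auto intro!: abs_summable_in_conv_radius simp: fps_conv_radius_def)
  then show ?thesis
    using \<open>0 \<le> r\<close> by (intro that[of \<rho>]) (simp_all add: norm_mult norm_power)
qed

lemma eval_fps_mult_poly_eq_on_ball:
  fixes F :: "complex fps" and p q :: "complex poly"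
  assumes "ereal r \<le> fps_conv_radius F"
    and "\<forall>\<^sub>F z in at 0. eval_fps F z * poly q z = poly p z"
    and "z \<in> ball 0 r"
  shows "eval_fps F z * poly q z = poly p z"
proof -
  let ?f = "\<lambda>z. eval_fps F z * poly q z - poly p z"
  let ?U = "{z \<in> ball 0 r. ?f z = 0}"
  have "r > 0" using assms(3) by (auto intro: le_less_trans[OF norm_ge_zero])
  then have "\<forall>\<^sub>F z in at 0. z \<in> ball (0 :: complex) r"
    by (intro eventually_at_in_open') auto
  with assms(2) have "\<forall>\<^sub>F z in at 0. z \<in> ?U"
    by eventually_elim auto
  then have "0 islimpt ?U"
    unfolding islimpt_conv_frequently_at by (rule eventually_frequently[OF at_neq_bot])
  have "eval_fps F holomorphic_on ball 0 r"
    by (intro holomorphic_on_eval_fps) (auto intro!: less_le_trans[OF _ assms(1)])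
  then have "?f holomorphic_on ball 0 r"
    by (intro holomorphic_on_diff holomorphic_on_mult poly_holomorphic_on holomorphic_on_ident)
  then have "?f z = 0"
    by (rule analytic_continuation[of ?f "ball 0 r" ?U 0])
       (use \<open>0 islimpt ?U\<close> \<open>r > 0\<close> assms(3) in auto)
  then show ?thesis by simp
qed

lemma norm_poly_le_on_cball:
  fixes F :: "complex fps" and p q :: "complex poly"
  assumes summable: "summable (\<lambda>m. norm (fps_nth F m))"
    and eq: "\<And>z. z \<in> ball 0 1 \<Longrightarrow> eval_fps F z * poly q z = poly p z"
    and "z \<in> cball 0 1"
  shows "norm (poly p z) \<le> (\<Sum>m. norm (fps_nth F m)) * norm (poly q z)"
proof -
  let ?B = "\<Sum>m. norm (fps_nth F m)"
  have "norm (poly p z) - ?B * norm (poly q z) \<le> 0"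
  proof (rule continuous_le_on_closure[where S = "ball 0 1" and a = 0 and x = z and
        f = "\<lambda>z. norm (poly p z) - ?B * norm (poly q z)"])
    show "continuous_on (closure (ball 0 1)) (\<lambda>z. norm (poly p z) - ?B * norm (poly q z))"
      by (intro continuous_intros)
    show "z \<in> closure (ball 0 1)" using \<open>z \<in> cball 0 1\<close> by simp
    show "norm (poly p z) - ?B * norm (poly q z) \<le> 0" if "z \<in> ball 0 1" for z
    proof -
      have "norm (poly p z) = norm (eval_fps F z) * norm (poly q z)"
        by (simp flip: eq[OF that] add: norm_mult)
      also have "\<dots> \<le> ?B * norm (poly q z)"
        using norm_eval_fps_le[OF summable, of z] that by (simp add: mult_right_mono)
      finally show ?thesis by simp
    qed
  qed
  then show ?thesis by simp
qed

lemma fps_conv_radius_ge_if_poly_nonzero: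
  fixes F :: "complex fps" and p q :: "complex poly"
  assumes "0 < r" and "ereal r \<le> fps_conv_radius F"
    and eq: "\<And>z. z \<in> ball 0 r \<Longrightarrow> eval_fps F z * poly q z = poly p z"
    and nonzero: "\<forall>z\<in>ball 0 R. poly q z \<noteq> 0"
  shows "ereal R \<le> fps_conv_radius F"
proof (cases "R \<le> r")
  case True
  then have "ereal R \<le> ereal r" by simp
  then show ?thesis using assms(2) by (rule order_trans)
next
  case False
  have "(\<lambda>z. poly p z / poly q z) has_fps_expansion F"
  proof (rule has_fps_expansion_cong[THEN iffD1])
    show "eval_fps F has_fps_expansion F"
      using \<open>0 < r\<close> by (intro eval_fps_has_fps_expansion less_le_trans[OF _ assms(2)]) simp
    have "\<forall>\<^sub>F z in nhds 0. z \<in> ball 0 r"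
      using \<open>0 < r\<close> by (intro eventually_nhds_in_open) auto
    then show "\<forall>\<^sub>F z in nhds 0. eval_fps F z = poly p z / poly q z"
      by eventually_elim (use eq nonzero False in \<open>auto simp: field_simps\<close>)
  qed simp
  moreover have "(\<lambda>z. poly p z / poly q z) holomorphic_on eball 0 (ereal R)"
    using nonzero by (auto intro!: holomorphic_intros)
  ultimately show ?thesis by (rule holomorphic_on_imp_fps_conv_radius_ge)
qed

lemma fps_conv_radius_gt_1_if_rational:
  fixes F :: "complex fps" and p q :: "complex poly"
  assumes summable: "summable (\<lambda>m. norm (fps_nth F m))"
    and "q \<noteq> 0" and rational: "\<forall>\<^sub>F z in at 0. eval_fps F z * poly q z = poly p z"
  shows "fps_conv_radius F > 1"
proof -
  obtain p' q' where coprime: "coprime p' q'" and "q' \<noteq> 0"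
    and rational': "\<forall>\<^sub>F z in at 0. eval_fps F z * poly q' z = poly p' z"
    using eventually_mult_poly_eq_coprime[OF \<open>q \<noteq> 0\<close> rational] by blast
  have "summable (\<lambda>m. fps_nth F m * 1 ^ m)"
    using summable by (simp add: summable_norm_cancel)
  then have "fps_conv_radius F \<ge> norm (1 :: complex)"
    unfolding fps_conv_radius_def by (rule conv_radius_geI)
  then have radius: "fps_conv_radius F \<ge> ereal 1" by simp
  have eq: "eval_fps F z * poly q' z = poly p' z" if "z \<in> ball 0 1" for z
    using radius rational' that by (rule eval_fps_mult_poly_eq_on_ball)
  have "poly q' z \<noteq> 0" if "z \<in> cball 0 1" for z
    using coprime norm_poly_le_on_cball[OF summable eq that] by (rule poly_nonzero_if_coprime_bounded)
  then obtain R where "R > 1" and nonzero: "\<forall>z\<in>ball 0 R. poly q' z \<noteq> 0"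
    using poly_nonzero_on_larger_ball[OF \<open>q' \<noteq> 0\<close>] by blast
  have "(1 :: ereal) < ereal R" using \<open>R > 1\<close> by simp
  also have "ereal R \<le> fps_conv_radius F"
    by (rule fps_conv_radius_ge_if_poly_nonzero[where r = 1, OF _ radius eq nonzero]) simp
  finally show ?thesis .
qed

definition mdegree :: "nat \<Rightarrow> (nat \<Rightarrow> nat) \<Rightarrow> nat" where
  "mdegree n k = (\<Sum>i<n. k i)"

definition mseries :: "nat \<Rightarrow> ((nat \<Rightarrow> nat) \<Rightarrow> real) \<Rightarrow> (nat \<Rightarrow> complex) \<Rightarrow> complex" where
  "mseries n a w = (\<Sum>\<^sub>\<infinity>k\<in>multi_indices n. complex_of_real (a k) * monom_val n k w)"

definition diagonal_coeff :: "nat \<Rightarrow> ((nat \<Rightarrow> nat) \<Rightarrow> real) \<Rightarrow> nat \<Rightarrow> real" where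
  "diagonal_coeff n a m = (\<Sum>\<^sub>\<infinity>k\<in>{k \<in> multi_indices n. mdegree n k = m}. a k)"

definition diagonal_fps :: "nat \<Rightarrow> ((nat \<Rightarrow> nat) \<Rightarrow> real) \<Rightarrow> complex fps" where
  "diagonal_fps n a = Abs_fps (\<lambda>m. complex_of_real (diagonal_coeff n a m))"

lemma monom_val_const: "monom_val n k (\<lambda>_. z) = z ^ mdegree n k"
  by (simp add: monom_val_def mdegree_def power_sum)

lemma norm_monom_val_le:
  assumes "\<forall>i<n. norm (w i) \<le> \<rho>"
  shows "norm (monom_val n k w) \<le> \<rho> ^ mdegree n k"
proof -
  have "norm (monom_val n k w) = (\<Prod>i<n. norm (w i) ^ k i)"
    by (simp add: monom_val_def prod_norm[symmetric] norm_power)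
  also have "\<dots> \<le> (\<Prod>i<n. \<rho> ^ k i)"
    using assms by (intro prod_mono) (auto intro: power_mono)
  also have "\<dots> = \<rho> ^ mdegree n k" by (simp add: mdegree_def power_sum)
  finally show ?thesis .
qed

lemma norm_mseries_term_le:
  assumes "a k \<ge> 0" and "\<forall>i<n. norm (w i) \<le> \<rho>"
  shows "norm (complex_of_real (a k) * monom_val n k w) \<le> a k * \<rho> ^ mdegree n k"
  using assms norm_monom_val_le[OF assms(2)] by (simp add: norm_mult mult_left_mono)

lemma mseries_summable_on:
  assumes nonneg: "\<forall>k\<in>multi_indices n. a k \<ge> 0"
    and summable: "(\<lambda>k. a k * \<rho> ^ mdegree n k) summable_on multi_indices n"
    and "\<forall>i<n. norm (w i) \<le> \<rho>"
  shows "(\<lambda>k. complex_of_real (a k) * monom_val n k w) summable_on multi_indices n"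
proof (rule abs_summable_summable)
  show "(\<lambda>k. norm (complex_of_real (a k) * monom_val n k w)) summable_on multi_indices n"
    using summable by (rule Infinite_Sum.abs_summable_on_comparison_test')
      (use assms norm_mseries_term_le in auto)
qed

lemma continuous_on_mseries:
  fixes w :: "'b::topological_space \<Rightarrow> nat \<Rightarrow> complex"
  assumes nonneg: "\<forall>k\<in>multi_indices n. a k \<ge> 0" and summable: "a summable_on multi_indices n"
    and cont: "\<And>i. i < n \<Longrightarrow> continuous_on S (\<lambda>x. w x i)"
    and bound: "\<And>x i. x \<in> S \<Longrightarrow> i < n \<Longrightarrow> norm (w x i) \<le> 1"
  shows "continuous_on S (\<lambda>x. mseries n a (w x))"
  unfolding mseries_def
proof (rule uniform_limit_theorem)
  show "uniform_limit S (\<lambda>K x. \<Sum>k\<in>K. complex_of_real (a k) * monom_val n k (w x))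
      (\<lambda>x. \<Sum>\<^sub>\<infinity>k\<in>multi_indices n. complex_of_real (a k) * monom_val n k (w x))
      (finite_subsets_at_top (multi_indices n))"
    by (rule Weierstrass_m_test_general[OF _ summable])
       (use norm_mseries_term_le[where \<rho> = 1] nonneg bound in auto)
  show "\<forall>\<^sub>F K in finite_subsets_at_top (multi_indices n).
      continuous_on S (\<lambda>x. \<Sum>k\<in>K. complex_of_real (a k) * monom_val n k (w x))"
    unfolding monom_val_def by (intro always_eventually allI continuous_intros) (use cont in auto)
qed simp

lemma diagonal_coeff_nonneg:
  assumes "\<forall>k\<in>multi_indices n. a k \<ge> 0"
  shows "diagonal_coeff n a m \<ge> 0"
  unfolding diagonal_coeff_def using assms by (intro infsum_nonneg) auto

lemma summable_diagonal_coeff: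
  assumes "a summable_on multi_indices n"
  shows "summable (diagonal_coeff n a)"
proof -
  have "(diagonal_coeff n a has_sum (\<Sum>\<^sub>\<infinity>k\<in>multi_indices n. a k)) UNIV"
    unfolding diagonal_coeff_def using assms by (intro has_sum_infsum_fibres) simp
  then show ?thesis by (auto dest: has_sum_imp_sums simp: sums_iff)
qed

lemma eval_diagonal_fps:
  assumes nonneg: "\<forall>k\<in>multi_indices n. a k \<ge> 0" and summable: "a summable_on multi_indices n"
    and "norm t \<le> 1"
  shows "eval_fps (diagonal_fps n a) t = mseries n a (\<lambda>_. t)"
proof -
  let ?f = "\<lambda>k. complex_of_real (a k) * monom_val n k (\<lambda>_. t)"
  let ?fibre = "\<lambda>m. {k \<in> multi_indices n. mdegree n k = m}"
  have "?f summable_on multi_indices n"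
    using \<open>norm t \<le> 1\<close> by (intro mseries_summable_on[OF nonneg, of 1]) (simp_all add: summable)
  then have "((\<lambda>m. \<Sum>\<^sub>\<infinity>k\<in>?fibre m. ?f k) has_sum mseries n a (\<lambda>_. t)) UNIV"
    unfolding mseries_def by (intro has_sum_infsum_fibres) simp
  moreover have "(\<Sum>\<^sub>\<infinity>k\<in>?fibre m. ?f k) = complex_of_real (diagonal_coeff n a m) * t ^ m" for m
  proof -
    have "(a has_sum diagonal_coeff n a m) (?fibre m)"
      unfolding diagonal_coeff_def
      by (rule has_sum_infsum, rule summable_on_subset_banach[OF summable]) auto
    then have fibre_sum: "((\<lambda>k. complex_of_real (a k) * t ^ m) has_sum
        complex_of_real (diagonal_coeff n a m) * t ^ m) (?fibre m)"
      by (intro has_sum_cmult_left has_sum_of_real)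
    have "(\<Sum>\<^sub>\<infinity>k\<in>?fibre m. ?f k) = (\<Sum>\<^sub>\<infinity>k\<in>?fibre m. complex_of_real (a k) * t ^ m)"
      by (rule infsum_cong) (simp add: monom_val_const)
    also have "\<dots> = complex_of_real (diagonal_coeff n a m) * t ^ m"
      using fibre_sum by (rule infsumI)
    finally show ?thesis .
  qed
  ultimately have "((\<lambda>m. fps_nth (diagonal_fps n a) m * t ^ m) has_sum mseries n a (\<lambda>_. t)) UNIV"
    by (simp add: diagonal_fps_def)
  then show ?thesis
    unfolding eval_fps_def by (simp add: has_sum_imp_sums sums_unique[symmetric])
qed

lemma summable_on_mdegree_weighted:
  assumes nonneg: "\<forall>k\<in>multi_indices n. a k \<ge> 0" and summable: "a summable_on multi_indices n"
    and "\<rho> \<ge> 0" and weighted: "summable (\<lambda>m. diagonal_coeff n a m * \<rho> ^ m)"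
  shows "(\<lambda>k. a k * \<rho> ^ mdegree n k) summable_on multi_indices n"
proof (rule summable_on_if_fibres_summable)
  let ?fibre = "\<lambda>m. {k \<in> multi_indices n. mdegree n k = m}"
  have fibre_summable: "a summable_on ?fibre m" for m
    by (rule summable_on_subset_banach[OF summable]) auto
  show "(\<lambda>k. a k * \<rho> ^ mdegree n k) summable_on ?fibre m" for m
  proof -
    have "(\<lambda>k. a k * \<rho> ^ m) summable_on ?fibre m"
      using fibre_summable by (rule summable_on_cmult_left)
    then show ?thesis by (rule summable_on_cong[THEN iffD1, rotated]) auto
  qed
  have "(\<Sum>\<^sub>\<infinity>k\<in>?fibre m. a k * \<rho> ^ mdegree n k) = (\<Sum>\<^sub>\<infinity>k\<in>?fibre m. a k * \<rho> ^ m)" for m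
    by (rule infsum_cong) simp
  then have fibre_sum: "(\<Sum>\<^sub>\<infinity>k\<in>?fibre m. a k * \<rho> ^ mdegree n k) = diagonal_coeff n a m * \<rho> ^ m" for m
    by (simp add: diagonal_coeff_def infsum_cmult_left')
  have "(\<lambda>m. diagonal_coeff n a m * \<rho> ^ m) summable_on UNIV"
    using weighted diagonal_coeff_nonneg[OF nonneg] \<open>\<rho> \<ge> 0\<close>
    by (subst summable_on_UNIV_nonneg_real_iff) auto
  then show "(\<lambda>m. \<Sum>\<^sub>\<infinity>k\<in>?fibre m. a k * \<rho> ^ mdegree n k) summable_on UNIV"
    by (simp add: fibre_sum)
qed (use nonneg \<open>\<rho> \<ge> 0\<close> in auto)

lemma mpoly_fun_along_line:
  assumes "is_mpoly_fun n P"
  obtains PP :: "complex poly poly"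
  where "\<And>s t. poly (map_poly (\<lambda>c. poly c t) PP) s = P (\<lambda>i. t + s * v i)"
proof -
  obtain A c where P: "P = (\<lambda>w. \<Sum>k\<in>A. c k * monom_val n k w)"
    using assms unfolding is_mpoly_fun_def by blast
  show ?thesis
    by (rule that[of "\<Sum>k\<in>A. [:[:c k:]:] * (\<Prod>i<n. [:[:0, 1:], [:v i:]:] ^ k i)"])
       (simp add: poly_map_poly_eval_swap poly_sum poly_prod poly_power P monom_val_def algebra_simps)
qed

lemma line_in_polydisc_near_0:
  fixes v :: "nat \<Rightarrow> complex"
  assumes "norm t < r"
  obtains \<delta> where "\<delta> > 0" and "\<And>s i. norm s \<le> \<delta> \<Longrightarrow> i < n \<Longrightarrow> norm (t + s * v i) < r"
proof
  define M where "M = 1 + (\<Sum>i<n. norm (v i))"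
  have "M > 0" unfolding M_def by (simp add: add_pos_nonneg sum_nonneg)
  then show "(r - norm t) / (2 * M) > 0" using assms by simp
  fix s :: complex and i assume s: "norm s \<le> (r - norm t) / (2 * M)" and "i < n"
  have "norm (v i) \<le> (\<Sum>i<n. norm (v i))"
    by (rule member_le_sum) (use \<open>i < n\<close> in auto)
  then have "norm (v i) \<le> M" by (simp add: M_def)
  have "norm (t + s * v i) \<le> norm t + norm s * M"
    using norm_triangle_ineq[of t "s * v i"] mult_left_mono[OF \<open>norm (v i) \<le> M\<close>, of "norm s"]
    by (simp add: norm_mult)
  moreover have "norm s * M \<le> (r - norm t) / 2"
    using s \<open>M > 0\<close> by (simp add: field_simps)
  ultimately show "norm (t + s * v i) < r" using assms by argo
qed

lemma coeff_along_line_eq_mseries_times_coeff: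
  fixes ps qs :: "complex poly"
  assumes nonneg: "\<forall>k\<in>multi_indices n. a k \<ge> 0" and summable: "a summable_on multi_indices n"
    and expansion: "\<And>w. \<forall>i<n. norm (w i) < r \<Longrightarrow> Q w \<noteq> 0 \<Longrightarrow> mseries n a w * Q w = P w"
    and "r \<le> 1" and "norm t < r"
    and ps: "\<And>s. poly ps s = P (\<lambda>i. t + s * v i)"
    and qs: "\<And>s. poly qs s = Q (\<lambda>i. t + s * v i)"
    and "qs \<noteq> 0" and low: "\<forall>j<m. coeff qs j = 0"
  shows "coeff ps m = mseries n a (\<lambda>_. t) * coeff qs m"
proof -
  obtain \<delta> where "\<delta> > 0" and near: "\<And>s i. norm s \<le> \<delta> \<Longrightarrow> i < n \<Longrightarrow> norm (t + s * v i) < r"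
    using line_in_polydisc_near_0[OF \<open>norm t < r\<close>] by blast
  have "continuous_on (cball 0 \<delta>) (\<lambda>s. mseries n a (\<lambda>i. t + s * v i))"
  proof (rule continuous_on_mseries[OF nonneg summable])
    show "continuous_on (cball 0 \<delta>) (\<lambda>s. t + s * v i)" for i
      by (intro continuous_intros)
    show "norm (t + s * v i) \<le> 1" if "s \<in> cball 0 \<delta>" "i < n" for s i
      using near[of s i] that \<open>r \<le> 1\<close> by simp
  qed
  then have "isCont (\<lambda>s. mseries n a (\<lambda>i. t + s * v i)) 0"
    by (rule continuous_on_interior) (use \<open>\<delta> > 0\<close> in simp)
  then have "((\<lambda>s. mseries n a (\<lambda>i. t + s * v i)) \<longlongrightarrow> mseries n a (\<lambda>_. t)) (at 0)"
    by (simp add: isCont_def)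
  moreover have "\<forall>\<^sub>F s in at 0. mseries n a (\<lambda>i. t + s * v i) * poly qs s = poly ps s"
  proof -
    have "\<forall>\<^sub>F s in at 0. s \<in> ball 0 \<delta>"
      by (rule eventually_at_in_open') (use \<open>\<delta> > 0\<close> in auto)
    with eventually_poly_nonzero[OF \<open>qs \<noteq> 0\<close>] show ?thesis
    proof eventually_elim
      case (elim s)
      then show ?case using expansion[of "\<lambda>i. t + s * v i"] near[of s] by (simp add: ps qs)
    qed
  qed
  ultimately show ?thesis using low by (rule coeff_eq_limit_times_coeff)
qed

lemma diagonal_series_rational:
  fixes v :: "nat \<Rightarrow> complex"
  assumes P: "is_mpoly_fun n P" and Q: "is_mpoly_fun n Q" and "Q v \<noteq> 0"
    and nonneg: "\<forall>k\<in>multi_indices n. a k \<ge> 0" and summable: "a summable_on multi_indices n"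
    and expansion: "\<And>w. \<forall>i<n. norm (w i) < r \<Longrightarrow> Q w \<noteq> 0 \<Longrightarrow> mseries n a w * Q w = P w"
    and "0 < r" "r \<le> 1"
  obtains p q :: "complex poly" where "q \<noteq> 0"
    and "\<forall>\<^sub>F t in at 0. eval_fps (diagonal_fps n a) t * poly q t = poly p t"
proof -
  obtain PP where PP: "\<And>s t. poly (map_poly (\<lambda>c. poly c t) PP) s = P (\<lambda>i. t + s * v i)"
    using mpoly_fun_along_line[OF P] by blast
  obtain QQ where QQ: "\<And>s t. poly (map_poly (\<lambda>c. poly c t) QQ) s = Q (\<lambda>i. t + s * v i)"
    using mpoly_fun_along_line[OF Q] by blast
  have "QQ \<noteq> 0" using QQ[where s = 1 and t = 0] \<open>Q v \<noteq> 0\<close> by auto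
  define j where "j = (LEAST j. coeff QQ j \<noteq> 0)"
  have "coeff QQ j \<noteq> 0"
    unfolding j_def by (rule LeastI_ex) (use \<open>QQ \<noteq> 0\<close> leading_coeff_0_iff in blast)
  have low: "coeff QQ i = 0" if "i < j" for i
    using not_less_Least[of i "\<lambda>j. coeff QQ j \<noteq> 0"] that by (simp add: j_def)
  show ?thesis
  proof (rule that[OF \<open>coeff QQ j \<noteq> 0\<close>])
    have "\<forall>\<^sub>F t in at 0. t \<in> ball 0 r"
      by (rule eventually_at_in_open') (use \<open>r > 0\<close> in auto)
    with eventually_poly_nonzero[OF \<open>coeff QQ j \<noteq> 0\<close>]
    show "\<forall>\<^sub>F t in at 0. eval_fps (diagonal_fps n a) t * poly (coeff QQ j) t = poly (coeff PP j) t"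
    proof eventually_elim
      case (elim t)
      have "coeff (map_poly (\<lambda>c. poly c t) QQ) j \<noteq> 0"
        using elim by (simp add: coeff_map_poly)
      then have "map_poly (\<lambda>c. poly c t) QQ \<noteq> 0" by auto
      then have "coeff (map_poly (\<lambda>c. poly c t) PP) j
          = mseries n a (\<lambda>_. t) * coeff (map_poly (\<lambda>c. poly c t) QQ) j"
        using elim low
        by (intro coeff_along_line_eq_mseries_times_coeff
            [OF nonneg summable expansion \<open>r \<le> 1\<close> _ PP QQ]) (auto simp: coeff_map_poly)
      moreover have "eval_fps (diagonal_fps n a) t = mseries n a (\<lambda>_. t)"
        using elim \<open>r \<le> 1\<close> by (intro eval_diagonal_fps[OF nonneg summable]) auto
      ultimately show ?case by (simp add: coeff_map_poly)
    qed
  qed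
qed

theorem lemmaB3:
  fixes n :: nat
    and P Q :: "(nat \<Rightarrow> complex) \<Rightarrow> complex"
    and a :: "(nat \<Rightarrow> nat) \<Rightarrow> real"
  assumes P: "is_mpoly_fun n P"
    and Q: "is_mpoly_fun n Q"
    and Q_nonzero: "Q \<noteq> (\<lambda>w. 0)"
    and expansion: "\<exists>r>0. \<forall>w. (\<forall>i<n. norm (w i) < r) \<and> Q w \<noteq> 0 \<longrightarrow>
        ((\<lambda>k. complex_of_real (a k) * monom_val n k w) has_sum (P w / Q w)) (multi_indices n)"
    and nonneg: "\<forall>k\<in>multi_indices n. a k \<ge> 0"
    and finite_sum: "a summable_on multi_indices n"
  shows "\<exists>\<epsilon>>0. \<forall>w. (\<forall>i<n. norm (w i) \<le> 1 + \<epsilon>) \<longrightarrow>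
        (\<lambda>k. complex_of_real (a k) * monom_val n k w) summable_on multi_indices n"
proof -
  obtain r where "r > 0" and has_sum: "\<And>w. \<forall>i<n. norm (w i) < r \<Longrightarrow> Q w \<noteq> 0 \<Longrightarrow>
      ((\<lambda>k. complex_of_real (a k) * monom_val n k w) has_sum (P w / Q w)) (multi_indices n)"
    using expansion by blast
  have expansion': "mseries n a w * Q w = P w" if "\<forall>i<n. norm (w i) < min r 1" "Q w \<noteq> 0" for w
    using has_sum[of w] that by (simp add: mseries_def infsumI)
  obtain v where "Q v \<noteq> 0" using Q_nonzero by auto
  obtain p q where "q \<noteq> 0"
    and rational: "\<forall>\<^sub>F t in at 0. eval_fps (diagonal_fps n a) t * poly q t = poly p t"
    by (rule diagonal_series_rational
        [where r = "min r 1", OF P Q \<open>Q v \<noteq> 0\<close> nonneg finite_sum expansion'])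
       (use \<open>r > 0\<close> in auto)
  have radius: "fps_conv_radius (diagonal_fps n a) > 1"
    using summable_diagonal_coeff[OF finite_sum] diagonal_coeff_nonneg[OF nonneg]
    by (intro fps_conv_radius_gt_1_if_rational[OF _ \<open>q \<noteq> 0\<close> rational]) (simp add: diagonal_fps_def)
  obtain \<rho> where "\<rho> > 1" and "summable (\<lambda>m. norm (fps_nth (diagonal_fps n a) m) * \<rho> ^ m)"
    using summable_if_fps_conv_radius_gt[OF _ radius[unfolded one_ereal_def]] by auto
  then have "summable (\<lambda>m. diagonal_coeff n a m * \<rho> ^ m)"
    using diagonal_coeff_nonneg[OF nonneg] by (simp add: diagonal_fps_def)
  then have "(\<lambda>k. a k * \<rho> ^ mdegree n k) summable_on multi_indices n"
    using \<open>\<rho> > 1\<close> by (intro summable_on_mdegree_weighted[OF nonneg finite_sum]) auto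
  then show ?thesis
    using \<open>\<rho> > 1\<close> by (intro exI[of _ "\<rho> - 1"]) (auto intro: mseries_summable_on[OF nonneg])
qed

end
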